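(* Let $\mathbf C$ be a clone $\tau$-algebra and $c\in C$. If $c$ is $n$-central for some $n$, then for every $m\ge1$: $c$ is $m$-central if and only if $m\ge\gamma(c)$.
   Context: A clone $\tau$-algebra is an algebra $\mathbf C=(C,\sigma^{\mathbf C}\ (\sigma\in\tau),q_n^{\mathbf C}\ (n\ge0),\mathsf e_i^{\mathbf C}\ (i\ge1))$ with $\mathsf e_i$ nullary, $q_n$ of arity $n+1$, satisfying: (C1) $q_n(\mathsf e_i,x_1,\dots,x_n)=x_i$ ($1\le i\le n$); (C2) $q_n(\mathsf e_j,x_1,\dots,x_n)=\mathsf e_j$ ($j>n$); (C3) $q_n(x,\mathsf e_1,\dots,\mathsf e_n)=x$; (C4) $q_k(x,y_1,\dots,y_k)=q_n(x,y_1,\dots,y_k,\mathsf e_{k+1},\dots,\mathsf e_n)$ ($n>k$); (C5) $q_n(q_n(x,\mathbf y),\mathbf z)=q_n(x,q_n(y_1,\mathbf z),\dots,q_n(y_n,\mathbf z))$; (C6) $q_n(\sigma(x_1,\dots,x_k),\mathbf y)=\sigma(q_n(x_1,\mathbf y),\dots,q_n(x_k,\mathbf y))$ for $\sigma\in\tau$ of arity $k$. An element $a$ is independent of $\mathsf e_n$ if $q_n(a,\mathsf e_1,\dots,\mathsf e_{n-1},\mathsf e_{n+1})=a$, dependent otherwise; $\gamma(a)$ is $\omega$ if $a$ depends on infinitely many $\mathsf e_i$, $0$ if on none, otherwise the largest $i$ with $a$ dependent on $\mathsf e_i$. For $a,b\in C$, $\theta(a,b)$ is the smallest congruence of $\mathbf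 C$ containing $(a,b)$. An element $c$ is $n$-central if $\theta(c,\mathsf e_1),\dots,\theta(c,\mathsf e_n)$ is an $n$-tuple of complementary factor congruences, i.e. $\bigcap_i\theta(c,\mathsf e_i)$ is the identity relation and for all $a_1,\dots,a_n\in C$ there is a unique $u\in C$ with $a_i\,\theta(c,\mathsf e_i)\,u$ for all $i$; equivalently, $(a_1,\dots,a_n)\mapsto q_n(c,a_1,\dots,a_n)$ is a homomorphism $\mathbf C^n\to\mathbf C$ satisfying $q_n(c,x,\dots,x)=x$ and $q_n(c,q_n(c,x_{11},\dots,x_{1n}),\dots,q_n(c,x_{n1},\dots,x_{nn}))=q_n(c,x_{11},\dots,x_{nn})$. *)

theory Defs
  imports Main "HOL-Library.Extended_Nat"
begin

text \<open>The signature tau is given by a type 's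
  of operation symbols with arity function ar; sig s xs interprets symbol s on the
  argument list xs (of length ar s).  q n x ys is q_n(x, y_1, ..., y_n) with
  ys = [y_1, ..., y_n]; e i is the nullary constant e_i (i >= 1; e 0 is unused).\<close>

definition clone_algebra ::
  "'a set \<Rightarrow> ('s \<Rightarrow> nat) \<Rightarrow> ('s \<Rightarrow> 'a list \<Rightarrow> 'a) \<Rightarrow> (nat \<Rightarrow> 'a \<Rightarrow> 'a list \<Rightarrow> 'a) \<Rightarrow> (nat \<Rightarrow> 'a) \<Rightarrow> bool"
  where
  "clone_algebra C ar sig q e \<longleftrightarrow>
     (\<forall>i\<ge>1. e i \<in> C)
   \<and> (\<forall>s xs. length xs = ar s \<and> set xs \<subseteq> C \<longrightarrow> sig s xs \<in> C)
   \<and> (\<forall>n x ys. x \<in> C \<and> length ys = n \<and> set ys \<subseteq> C \<longrightarrow> q n x ys \<in> C)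
   \<comment> \<open>(C1)\<close>
   \<and> (\<forall>n i xs. length xs = n \<and> set xs \<subseteq> C \<and> 1 \<le> i \<and> i \<le> n \<longrightarrow> q n (e i) xs = xs ! (i - 1))
   \<comment> \<open>(C2)\<close>
   \<and> (\<forall>n j xs. length xs = n \<and> set xs \<subseteq> C \<and> j > n \<longrightarrow> q n (e j) xs = e j)
   \<comment> \<open>(C3)\<close>
   \<and> (\<forall>n x. x \<in> C \<longrightarrow> q n x (map e [1..<n+1]) = x)
   \<comment> \<open>(C4)\<close>
   \<and> (\<forall>n k x ys. n > k \<and> x \<in> C \<and> length ys = k \<and> set ys \<subseteq> C \<longrightarrow>
          q k x ys = q n x (ys @ map e [k+1..<n+1]))
   \<comment> \<open>(C5)\<close>
   \<and> (\<forall>n x ys zs. x \<in> C \<and> length ys = n \<and> set ys \<subseteq> C \<and> length zs = n \<and> set zs \<subseteq> C \<longrightarrow>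
          q n (q n x ys) zs = q n x (map (\<lambda>y. q n y zs) ys))
   \<comment> \<open>(C6)\<close>
   \<and> (\<forall>n s xs ys. length xs = ar s \<and> set xs \<subseteq> C \<and> length ys = n \<and> set ys \<subseteq> C \<longrightarrow>
          q n (sig s xs) ys = sig s (map (\<lambda>x. q n x ys) xs))"

text \<open>Congruences of the full algebra (all operations sigma, q_n and the constants e_i;
  compatibility with nullary operations is automatic).\<close>

definition is_congruence ::
  "'a set \<Rightarrow> ('s \<Rightarrow> nat) \<Rightarrow> ('s \<Rightarrow> 'a list \<Rightarrow> 'a) \<Rightarrow> (nat \<Rightarrow> 'a \<Rightarrow> 'a list \<Rightarrow> 'a) \<Rightarrow> ('a \<times> 'a) set \<Rightarrow> bool"
  where
  "is_congruence C ar sig q \<theta> \<longleftrightarrow>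
     equiv C \<theta>
   \<and> (\<forall>s xs ys. length xs = ar s \<and> length ys = ar s \<and> set xs \<subseteq> C \<and> set ys \<subseteq> C
          \<and> list_all2 (\<lambda>x y. (x, y) \<in> \<theta>) xs ys \<longrightarrow> (sig s xs, sig s ys) \<in> \<theta>)
   \<and> (\<forall>n x y xs ys. x \<in> C \<and> y \<in> C \<and> (x, y) \<in> \<theta> \<and> length xs = n \<and> length ys = n
          \<and> set xs \<subseteq> C \<and> set ys \<subseteq> C \<and> list_all2 (\<lambda>x y. (x, y) \<in> \<theta>) xs ys
          \<longrightarrow> (q n x xs, q n y ys) \<in> \<theta>)"

definition cg ::
  "'a set \<Rightarrow> ('s \<Rightarrow> nat) \<Rightarrow> ('s \<Rightarrow> 'a list \<Rightarrow> 'a) \<Rightarrow> (nat \<Rightarrow> 'a \<Rightarrow> 'a list \<Rightarrow> 'a) \<Rightarrow> 'a \<Rightarrow> 'a \<Rightarrow> ('a \<times> 'a) set"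
  where
  "cg C ar sig q a b = \<Inter> {\<theta>. is_congruence C ar sig q \<theta> \<and> (a, b) \<in> \<theta>}"

definition independent :: "(nat \<Rightarrow> 'a \<Rightarrow> 'a list \<Rightarrow> 'a) \<Rightarrow> (nat \<Rightarrow> 'a) \<Rightarrow> 'a \<Rightarrow> nat \<Rightarrow> bool"
  where
  "independent q e a n \<longleftrightarrow> q n a (map e [1..<n] @ [e (n + 1)]) = a"

definition dep_set :: "(nat \<Rightarrow> 'a \<Rightarrow> 'a list \<Rightarrow> 'a) \<Rightarrow> (nat \<Rightarrow> 'a) \<Rightarrow> 'a \<Rightarrow> nat set"
  where
  "dep_set q e a = {n. 1 \<le> n \<and> \<not> independent q e a n}"

definition gamma :: "(nat \<Rightarrow> 'a \<Rightarrow> 'a list \<Rightarrow> 'a) \<Rightarrow> (nat \<Rightarrow> 'a) \<Rightarrow> 'a \<Rightarrow> enat"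
  where
  "gamma q e a =
     (if infinite (dep_set q e a) then \<infinity>
      else if dep_set q e a = {} then 0
      else enat (Max (dep_set q e a)))"

text \<open>c is n-central: theta(c,e_1), ..., theta(c,e_n) is an n-tuple of complementary factor
  congruences: their intersection is the identity on C, and for all a_1..a_n in C there is a
  unique u in C with a_i theta(c,e_i) u for all i.\<close>

definition n_central ::
  "'a set \<Rightarrow> ('s \<Rightarrow> nat) \<Rightarrow> ('s \<Rightarrow> 'a list \<Rightarrow> 'a) \<Rightarrow> (nat \<Rightarrow> 'a \<Rightarrow> 'a list \<Rightarrow> 'a) \<Rightarrow> (nat \<Rightarrow> 'a) \<Rightarrow> 'a \<Rightarrow> nat \<Rightarrow> bool"
  where
  "n_central C ar sig q e c n \<longleftrightarrow>
     c \<in> C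
   \<and> (\<forall>x\<in>C. \<forall>y\<in>C. (\<forall>i\<in>{1..n}. (x, y) \<in> cg C ar sig q c (e i)) \<longrightarrow> x = y)
   \<and> (\<forall>as. length as = n \<and> set as \<subseteq> C \<longrightarrow>
        (\<exists>!u. u \<in> C \<and> (\<forall>i\<in>{1..n}. (as ! (i - 1), u) \<in> cg C ar sig q c (e i))))"

end

theory Submission
  imports Defs
begin

text \<open>The congruence \<open>\<theta>(c, e\<^sub>i)\<close> relates \<open>q\<^sub>n(c, a\<^sub>1, \<dots>, a\<^sub>n)\<close> to \<open>a\<^sub>i\<close> for every
  \<open>i \<le> n\<close>, so the existence half of \<open>n\<close>-centrality is automatic and \<open>c\<close> is \<open>n\<close>-central
  exactly when \<open>\<theta>(c, e\<^sub>1) \<inter> \<dots> \<inter> \<theta>(c, e\<^sub>n)\<close> is the identity.  If this holds for \<open>m\<close>,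
  then for \<open>j > m\<close> the element \<open>q\<^sub>j(c, e\<^sub>1, \<dots>, e\<^sub>j\<^sub>-\<^sub>1, e\<^sub>j\<^sub>+\<^sub>1)\<close> is related to \<open>e\<^sub>i\<close>, hence
  to \<open>c\<close>, by every \<open>\<theta>(c, e\<^sub>i)\<close> with \<open>i \<le> m\<close>, so it equals \<open>c\<close>: \<open>\<gamma>(c) \<le> m\<close>.  Conversely, if \<open>c\<close>
  is independent of \<open>e\<^sub>j\<close>, then \<open>q\<^sub>n(c, \<dots>)\<close> ignores its \<open>j\<close>-th argument, which makes
  \<open>\<theta>(c, e\<^sub>j)\<close> the total relation once \<open>c\<close> is \<open>n\<close>-central with \<open>j \<le> n\<close>; dropping these
  factors from the \<open>n\<close>-fold meet leaves the \<open>m\<close>-fold meet trivial whenever \<open>\<gamma>(c) \<le> m\<close>.\<close>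

lemma clone_algebra_e_closed:
  "clone_algebra C ar sig q e \<Longrightarrow> 1 \<le> i \<Longrightarrow> e i \<in> C"
  unfolding clone_algebra_def by (elim conjE) metis

lemma clone_algebra_q_closed:
  "clone_algebra C ar sig q e \<Longrightarrow> x \<in> C \<Longrightarrow> length ys = n \<Longrightarrow> set ys \<subseteq> C \<Longrightarrow> q n x ys \<in> C"
  unfolding clone_algebra_def by (elim conjE) metis

lemma clone_algebra_q_e:
  "clone_algebra C ar sig q e \<Longrightarrow> length xs = n \<Longrightarrow> set xs \<subseteq> C \<Longrightarrow> 1 \<le> i \<Longrightarrow> i \<le> n
    \<Longrightarrow> q n (e i) xs = xs ! (i - 1)"
  unfolding clone_algebra_def by (elim conjE) metis

lemma clone_algebra_q_extend:
  "clone_algebra C ar sig q e \<Longrightarrow> k < n \<Longrightarrow> x \<in> C \<Longrightarrow> length ys = k \<Longrightarrow> set ys \<subseteq> C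
    \<Longrightarrow> q k x ys = q n x (ys @ map e [k + 1..<n + 1])"
  unfolding clone_algebra_def by (elim conjE) metis

lemma clone_algebra_q_q:
  "clone_algebra C ar sig q e \<Longrightarrow> x \<in> C \<Longrightarrow> length ys = n \<Longrightarrow> set ys \<subseteq> C
    \<Longrightarrow> length zs = n \<Longrightarrow> set zs \<subseteq> C
    \<Longrightarrow> q n (q n x ys) zs = q n x (map (\<lambda>y. q n y zs) ys)"
  unfolding clone_algebra_def by (elim conjE) metis

lemma congruence_equiv: "is_congruence C ar sig q \<theta> \<Longrightarrow> equiv C \<theta>"
  unfolding is_congruence_def by blast

lemma congruence_q_left:
  assumes \<theta>: "is_congruence C ar sig q \<theta>" and xy: "(x, y) \<in> \<theta>"
    and xs: "length xs = n" "set xs \<subseteq> C"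
  shows "(q n x xs, q n y xs) \<in> \<theta>"
proof -
  have equiv: "equiv C \<theta>"
    using \<theta> by (rule congruence_equiv)
  then have "list_all2 (\<lambda>x y. (x, y) \<in> \<theta>) xs xs"
    using xs by (auto intro!: list.rel_refl_strong elim: equivE dest: refl_onD)
  moreover have "x \<in> C" "y \<in> C"
    using equiv xy by (auto simp: equiv_def)
  ultimately show ?thesis
    using \<theta> xy xs unfolding is_congruence_def by blast
qed

lemma mem_cg_iff:
  "(x, y) \<in> cg C ar sig q a b \<longleftrightarrow> (\<forall>\<theta>. is_congruence C ar sig q \<theta> \<and> (a, b) \<in> \<theta> \<longrightarrow> (x, y) \<in> \<theta>)"
  unfolding cg_def by blast

lemma cg_generator: "(a, b) \<in> cg C ar sig q a b"
  unfolding mem_cg_iff by blast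

lemma cg_sym: "(x, y) \<in> cg C ar sig q a b \<Longrightarrow> (y, x) \<in> cg C ar sig q a b"
  unfolding mem_cg_iff by (meson congruence_equiv equivE symD)

lemma cg_trans:
  "(x, y) \<in> cg C ar sig q a b \<Longrightarrow> (y, z) \<in> cg C ar sig q a b \<Longrightarrow> (x, z) \<in> cg C ar sig q a b"
  unfolding mem_cg_iff by (meson congruence_equiv equivE transD)

lemma cg_q_left:
  "(x, y) \<in> cg C ar sig q a b \<Longrightarrow> length xs = n \<Longrightarrow> set xs \<subseteq> C
    \<Longrightarrow> (q n x xs, q n y xs) \<in> cg C ar sig q a b"
  unfolding mem_cg_iff by (blast intro: congruence_q_left)

lemma q_cg_e_nth:
  assumes "clone_algebra C ar sig q e" and "1 \<le> i" "i \<le> n" and "length as = n" "set as \<subseteq> C"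
  shows "(q n c as, as ! (i - 1)) \<in> cg C ar sig q c (e i)"
proof -
  have "(q n c as, q n (e i) as) \<in> cg C ar sig q c (e i)"
    using cg_q_left[OF cg_generator assms(4,5)] .
  then show ?thesis
    using clone_algebra_q_e[OF assms(1,4,5,2,3)] by simp
qed

definition cg_meet_trivial ::
  "'a set \<Rightarrow> ('s \<Rightarrow> nat) \<Rightarrow> ('s \<Rightarrow> 'a list \<Rightarrow> 'a) \<Rightarrow> (nat \<Rightarrow> 'a \<Rightarrow> 'a list \<Rightarrow> 'a) \<Rightarrow> (nat \<Rightarrow> 'a) \<Rightarrow> 'a \<Rightarrow> nat \<Rightarrow> bool"
  where
  "cg_meet_trivial C ar sig q e c n \<longleftrightarrow>
     (\<forall>x\<in>C. \<forall>y\<in>C. (\<forall>i\<in>{1..n}. (x, y) \<in> cg C ar sig q c (e i)) \<longrightarrow> x = y)"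

lemma n_central_iff_cg_meet_trivial:
  assumes ca: "clone_algebra C ar sig q e"
  shows "n_central C ar sig q e c n \<longleftrightarrow> c \<in> C \<and> cg_meet_trivial C ar sig q e c n"
proof -
  have "\<exists>!u. u \<in> C \<and> (\<forall>i\<in>{1..n}. (as ! (i - 1), u) \<in> cg C ar sig q c (e i))"
    if c: "c \<in> C" and meet: "cg_meet_trivial C ar sig q e c n" and as: "length as = n" "set as \<subseteq> C"
    for as
  proof (rule ex_ex1I)
    show "\<exists>u. u \<in> C \<and> (\<forall>i\<in>{1..n}. (as ! (i - 1), u) \<in> cg C ar sig q c (e i))"
    proof (intro exI conjI ballI)
      show "q n c as \<in> C"
        using clone_algebra_q_closed[OF ca c as] .
      show "(as ! (i - 1), q n c as) \<in> cg C ar sig q c (e i)" if "i \<in> {1..n}" for i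
        using q_cg_e_nth[OF ca _ _ as, of i c] that by (simp add: cg_sym)
    qed
  next
    fix u v
    assume "u \<in> C \<and> (\<forall>i\<in>{1..n}. (as ! (i - 1), u) \<in> cg C ar sig q c (e i))"
      and "v \<in> C \<and> (\<forall>i\<in>{1..n}. (as ! (i - 1), v) \<in> cg C ar sig q c (e i))"
    then show "u = v"
      using meet unfolding cg_meet_trivial_def by (blast intro: cg_sym cg_trans)
  qed
  then show ?thesis
    unfolding n_central_def cg_meet_trivial_def by blast
qed

lemma independent_if_cg_meet_trivial:
  assumes ca: "clone_algebra C ar sig q e" and c: "c \<in> C"
    and meet: "cg_meet_trivial C ar sig q e c m" and j: "m < j"
  shows "independent q e c j"
proof -
  define ws where "ws = map e [1..<j] @ [e (j + 1)]"
  have ws: "length ws = j" "set ws \<subseteq> C"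
    using clone_algebra_e_closed[OF ca] j unfolding ws_def by auto
  have "(q j c ws, c) \<in> cg C ar sig q c (e i)" if i: "i \<in> {1..m}" for i
  proof -
    have "ws ! (i - 1) = e i"
      using i j unfolding ws_def by (auto simp: nth_append)
    then have "(q j c ws, e i) \<in> cg C ar sig q c (e i)"
      using q_cg_e_nth[OF ca _ _ ws, of i c] i j by simp
    then show ?thesis
      using cg_generator cg_sym cg_trans by metis
  qed
  then have "q j c ws = c"
    using meet c clone_algebra_q_closed[OF ca c ws] unfolding cg_meet_trivial_def by blast
  then show ?thesis
    unfolding independent_def ws_def by simp
qed

lemma map_e_skip_eq:
  assumes "1 \<le> j" "j \<le> n"
  shows "map (\<lambda>k. e (if k = j - 1 then j + 1 else k + 1)) [0..<n + 1]
    = (map e [1..<j] @ [e (j + 1)]) @ map e [j + 1..<n + 1 + 1]"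
  using assms by (intro nth_equalityI) (auto simp: nth_append simp del: upt_Suc)

text \<open>Independence of \<open>e\<^sub>j\<close> lets \<open>q\<^sub>n(c, \<dots>)\<close> read its \<open>j\<close>-th argument from position \<open>j + 1\<close>:
  extend to \<open>q\<^sub>n\<^sub>+\<^sub>1\<close> by (C4), write \<open>c = q\<^sub>n\<^sub>+\<^sub>1(c, e\<^sub>1, \<dots>, e\<^sub>j\<^sub>-\<^sub>1, e\<^sub>j\<^sub>+\<^sub>1, e\<^sub>j\<^sub>+\<^sub>1, \<dots>, e\<^sub>n\<^sub>+\<^sub>1)\<close>
  and substitute by (C5) and (C1).\<close>

lemma q_independent_shift:
  assumes ca: "clone_algebra C ar sig q e" and c: "c \<in> C" and j: "1 \<le> j" "j \<le> n"
    and ind: "independent q e c j" and zs: "length zs = n" "set zs \<subseteq> C"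
  shows "q n c zs = q (n + 1) c ((zs @ [e (n + 1)])[j - 1 := (zs @ [e (n + 1)]) ! j])"
proof -
  define zs' where "zs' = zs @ [e (n + 1)]"
  define W where "W = map (\<lambda>k. e (if k = j - 1 then j + 1 else k + 1)) [0..<n + 1]"
  have zs': "length zs' = n + 1" "set zs' \<subseteq> C"
    using zs clone_algebra_e_closed[OF ca] unfolding zs'_def by auto
  have W: "length W = n + 1" "set W \<subseteq> C"
    using clone_algebra_e_closed[OF ca] unfolding W_def by auto
  have "c = q j c (map e [1..<j] @ [e (j + 1)])"
    using ind unfolding independent_def by simp
  also have "\<dots> = q (n + 1) c ((map e [1..<j] @ [e (j + 1)]) @ map e [j + 1..<n + 1 + 1])"
    by (rule clone_algebra_q_extend[OF ca _ c]) (use j clone_algebra_e_closed[OF ca] in auto)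
  also have "\<dots> = q (n + 1) c W"
    by (simp only: W_def map_e_skip_eq[OF j])
  finally have c_W: "c = q (n + 1) c W" .
  have W_zs': "map (\<lambda>w. q (n + 1) w zs') W = zs'[j - 1 := zs' ! j]"
  proof (rule nth_equalityI)
    fix k assume "k < length (map (\<lambda>w. q (n + 1) w zs') W)"
    then have k: "k < n + 1"
      using W by simp
    have "map (\<lambda>w. q (n + 1) w zs') W ! k = q (n + 1) (e (if k = j - 1 then j + 1 else k + 1)) zs'"
      unfolding W_def using k by (simp del: upt_Suc)
    also have "\<dots> = zs' ! ((if k = j - 1 then j + 1 else k + 1) - 1)"
      using clone_algebra_q_e[OF ca zs'] j k by auto
    also have "\<dots> = zs'[j - 1 := zs' ! j] ! k"
      using k zs' j by auto
    finally show "map (\<lambda>w. q (n + 1) w zs') W ! k = zs'[j - 1 := zs' ! j] ! k" .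
  qed (use W zs' in simp)
  have "q n c zs = q (n + 1) c zs'"
    using clone_algebra_q_extend[OF ca, of n "n + 1" c zs] c zs unfolding zs'_def by simp
  also have "\<dots> = q (n + 1) c (map (\<lambda>w. q (n + 1) w zs') W)"
    using clone_algebra_q_q[OF ca c W zs'] c_W by simp
  also have "\<dots> = q (n + 1) c (zs'[j - 1 := zs' ! j])"
    unfolding W_zs' ..
  finally show ?thesis
    unfolding zs'_def .
qed

lemma q_independent_update:
  assumes ca: "clone_algebra C ar sig q e" and c: "c \<in> C" and j: "1 \<le> j" "j \<le> n"
    and ind: "independent q e c j" and zs: "length zs = n" "set zs \<subseteq> C" and y: "y \<in> C"
  shows "q n c (zs[j - 1 := y]) = q n c zs"
proof -
  have "set (zs[j - 1 := y]) \<subseteq> C"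
    using zs y set_update_subset_insert by fastforce
  then have "q n c (zs[j - 1 := y])
      = q (n + 1) c ((zs[j - 1 := y] @ [e (n + 1)])[j - 1 := (zs[j - 1 := y] @ [e (n + 1)]) ! j])"
    using q_independent_shift[OF ca c j ind] zs by simp
  also have "\<dots> = q (n + 1) c ((zs @ [e (n + 1)])[j - 1 := (zs @ [e (n + 1)]) ! j])"
    using j zs by (simp add: list_update_append1 nth_append)
  also have "\<dots> = q n c zs"
    using q_independent_shift[OF ca c j ind zs] by simp
  finally show ?thesis .
qed

lemma q_replicate_if_cg_meet_trivial:
  assumes ca: "clone_algebra C ar sig q e" and c: "c \<in> C"
    and meet: "cg_meet_trivial C ar sig q e c n" and x: "x \<in> C"
  shows "q n c (replicate n x) = x"
proof -
  have xs: "length (replicate n x) = n" "set (replicate n x) \<subseteq> C"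
    using x by auto
  have "(q n c (replicate n x), x) \<in> cg C ar sig q c (e i)" if "i \<in> {1..n}" for i
    using q_cg_e_nth[OF ca _ _ xs, of i c] that by simp
  moreover have "q n c (replicate n x) \<in> C"
    using clone_algebra_q_closed[OF ca c xs] .
  ultimately show ?thesis
    using meet x unfolding cg_meet_trivial_def by blast
qed

lemma cg_total_if_independent:
  assumes ca: "clone_algebra C ar sig q e" and c: "c \<in> C"
    and meet: "cg_meet_trivial C ar sig q e c n" and j: "1 \<le> j" "j \<le> n"
    and ind: "independent q e c j" and x: "x \<in> C" and y: "y \<in> C"
  shows "(x, y) \<in> cg C ar sig q c (e j)"
proof -
  define xs where "xs = replicate n x"
  have xs: "length xs = n" "set xs \<subseteq> C"
    using x unfolding xs_def by auto
  have ys: "length (xs[j - 1 := y]) = n" "set (xs[j - 1 := y]) \<subseteq> C"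
    using xs y set_update_subset_insert by fastforce+
  have "x = q n c (xs[j - 1 := y])"
    using q_independent_update[OF ca c j ind xs y] q_replicate_if_cg_meet_trivial[OF ca c meet x]
    unfolding xs_def by simp
  also have "(q n c (xs[j - 1 := y]), y) \<in> cg C ar sig q c (e j)"
    using q_cg_e_nth[OF ca j ys] xs j by simp
  finally show ?thesis .
qed

lemma cg_meet_trivial_if_independent:
  assumes ca: "clone_algebra C ar sig q e" and c: "c \<in> C"
    and meet: "cg_meet_trivial C ar sig q e c n" and ind: "\<forall>j>m. independent q e c j"
  shows "cg_meet_trivial C ar sig q e c m"
  unfolding cg_meet_trivial_def
proof (intro ballI impI)
  fix x y assume x: "x \<in> C" and y: "y \<in> C"
    and xy: "\<forall>i\<in>{1..m}. (x, y) \<in> cg C ar sig q c (e i)"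
  have "(x, y) \<in> cg C ar sig q c (e i)" if i: "i \<in> {1..n}" for i
  proof (cases "i \<le> m")
    case True
    then show ?thesis
      using xy i by simp
  next
    case False
    with i ind have "1 \<le> i" "i \<le> n" "independent q e c i"
      by auto
    then show ?thesis
      using cg_total_if_independent[OF ca c meet _ _ _ x y] by blast
  qed
  then show "x = y"
    using meet x y unfolding cg_meet_trivial_def by blast
qed

lemma independent_above_iff_dep_set_le:
  "(\<forall>j>m. independent q e c j) \<longleftrightarrow> dep_set q e c \<subseteq> {..m}"
proof
  show "dep_set q e c \<subseteq> {..m}" if "\<forall>j>m. independent q e c j"
    using that by (auto simp: dep_set_def not_le[symmetric])
  show "\<forall>j>m. independent q e c j" if "dep_set q e c \<subseteq> {..m}"
  proof (intro allI impI)
    fix j assume "m < j"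
    then have "j \<notin> dep_set q e c"
      using that by auto
    then show "independent q e c j"
      using \<open>m < j\<close> by (simp add: dep_set_def)
  qed
qed

lemma gamma_le_enat_iff_dep_set_le: "gamma q e c \<le> enat m \<longleftrightarrow> dep_set q e c \<subseteq> {..m}"
  by (auto simp: gamma_def finite_subset dest: infinite_super)

theorem proposition11p3:
  fixes C :: "'a set" and ar :: "'s \<Rightarrow> nat" and sig :: "'s \<Rightarrow> 'a list \<Rightarrow> 'a"
    and q :: "nat \<Rightarrow> 'a \<Rightarrow> 'a list \<Rightarrow> 'a" and e :: "nat \<Rightarrow> 'a"
    and c :: 'a and n m :: nat
  assumes "clone_algebra C ar sig q e"
    and "c \<in> C"
    and "n_central C ar sig q e c n"
    and "m \<ge> 1"
  shows "n_central C ar sig q e c m \<longleftrightarrow> enat m \<ge> gamma q e c"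
proof -
  have meet_n: "cg_meet_trivial C ar sig q e c n"
    using assms(1,3) by (simp add: n_central_iff_cg_meet_trivial)
  have "n_central C ar sig q e c m \<longleftrightarrow> cg_meet_trivial C ar sig q e c m"
    using assms(1,2) by (simp add: n_central_iff_cg_meet_trivial)
  also have "\<dots> \<longleftrightarrow> (\<forall>j>m. independent q e c j)"
    using independent_if_cg_meet_trivial[OF assms(1,2)]
      cg_meet_trivial_if_independent[OF assms(1,2) meet_n] by (intro iffI allI impI)
  also have "\<dots> \<longleftrightarrow> enat m \<ge> gamma q e c"
    by (simp add: independent_above_iff_dep_set_le gamma_le_enat_iff_dep_set_le)
  finally show ?thesis .
qed

end
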